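(* For $n\ge1$ the coefficients satisfy the hierarchy $$l_{n1}=nF'',\qquad l_{n2}=\sum_{j=1}^{n-1}j\,\frac{d^2}{dt^2}\log l_{n-j,1},\qquad l_{np}=\sum_{j=1}^{n-1}j\,\frac{d^2}{dt^2}m_{n-j,p-2}\quad(p\ge3).$$ Consequently $$l_{n2}=\tfrac12 n(n-1)\,\frac{F^{(2)}F^{(4)}-(F^{(3)})^2}{(F^{(2)})^2},\qquad l_{n3}=\tfrac1{12}n(n-1)(n-2)\,\frac{d^2}{dt^2}\Big(\frac{F^{(2)}F^{(4)}-(F^{(3)})^2}{(F^{(2)})^3}\Big).$$
   Context: Let $F$ be $C^\infty$ on an open interval $J$ with $F''>0$, and let $L_n(t,N)$ be defined by $L_0=\exp(NF(t))$ and, for $n\ge1$, $$L_n(t,N)=\frac1N\sum_{j=1}^n\frac jN\,\partial_t^2\log L_{n-j}(t,N).$$ For $n\ge1$, expand $L_n(t,N)=\sum_{p\ge1}l_{np}(t)N^{-p}$ in powers of $1/N$. Define $m_{np}$ by $$\sum_{p\ge1}m_{np}N^{-p}=\log\Big(1+\sum_{p\ge1}(l_{n,p+1}/l_{n1})N^{-p}\Big).$$ *)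

theory Defs
  imports "HOL-Analysis.Analysis" "HOL-Computational_Algebra.Formal_Power_Series"
begin

text \<open>For n >= 1, L_n(t,N) is represented by its coefficient
  family c with L_n = sum_{p>=1} c p t * x^p, x = 1/N (c 0 is unused).
  Writing L_n = x * G with G = sum_k c (k+1) t x^k, the formal second
  t-derivative of log L_n is (log L_n)'' = (G G'' - G'^2)/G^2 (the -log N part
  is killed by the t-derivatives); t-derivatives act coefficientwise.
  dlog_ser c t is this power series in x, evaluated at t.\<close>

definition dlog_ser :: "(nat \<Rightarrow> real \<Rightarrow> real) \<Rightarrow> real \<Rightarrow> real fps" where
  "dlog_ser c t =
     (let G  = Abs_fps (\<lambda>k. c (Suc k) t);
          G1 = Abs_fps (\<lambda>k. deriv (c (Suc k)) t);
          G2 = Abs_fps (\<lambda>k. deriv (deriv (c (Suc k))) t)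
      in (G * G2 - G1\<^sup>2) / G\<^sup>2)"

text \<open>lcoef F n p t = l_{np}(t): coefficient of N^(-p) in L_n(t,N), obtained from
  L_n = (1/N) sum_{j=1}^n (j/N) d_t^2 log L_{n-j}, where log L_0 = N F(t) exactly
  (so the j = n term contributes n F''(t)/N), and for n-j >= 1 the term
  d_t^2 log L_{n-j} is the formal series dlog_ser.\<close>

function lcoef :: "(real \<Rightarrow> real) \<Rightarrow> nat \<Rightarrow> nat \<Rightarrow> real \<Rightarrow> real" where
  "lcoef F n p t =
     (if n = 0 \<or> p = 0 then 0
      else (if p = 1 then real n * deriv (deriv F) t else 0)
         + (if 2 \<le> p then (\<Sum>j\<in>{1..<n}. real j * fps_nth (dlog_ser (lcoef F (n - j)) t) (p - 2))
            else 0))"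
  by pat_completeness auto
termination
  by (relation "Wellfounded.measure (\<lambda>(F, n, p, t). n)") auto

text \<open>m_{np}: sum_p m_{np} N^(-p) = log (1 + sum_p (l_{n,p+1}/l_{n1}) N^(-p)),
  the formal logarithm computed as ln(1+X) composed with the series.\<close>

definition mcoef :: "(real \<Rightarrow> real) \<Rightarrow> nat \<Rightarrow> nat \<Rightarrow> real \<Rightarrow> real" where
  "mcoef F n p t =
     fps_nth (fps_ln 1 oo Abs_fps (\<lambda>k. if k = 0 then 0 else lcoef F n (Suc k) t / lcoef F n 1 t)) p"

end

(* Write x = 1/N. For n >= 1 we have L_n = x G_n with G_n = l_{n1} (1 + H_n), and the
   t-derivatives act on the coefficients of these series, so

     (log L_n)'' = (G_n' / G_n)' = (log l_{n1})'' + (log (1 + H_n))''.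

   Hence the coefficient of x^0 in (log L_n)'' is (log l_{n1})'' and that of x^q, q >= 1, is m_{nq}'';
   inserting this into the recursion for L_n gives the hierarchy. Since l_{m1} = m F'', the term
   (log l_{m1})'' = (log F'')'' = (F'' F'''' - F'''^2) / F''^2 does not depend on m, and summing the
   weights j = 1, ..., n - 1 gives l_{n2}. Then m_{m1} = l_{m2} / l_{m1} = (m - 1)/2 (log F'')'' / F'',
   and sum_{j<n} j (n - j - 1) / 2 = n (n - 1) (n - 2) / 12 gives l_{n3}. *)

theory Submission
  imports Defs
begin

unbundle no vec_syntax
unbundle fps_syntax

section \<open>Smooth real functions on open sets\<close>

fun higher_differentiable_on :: "nat \<Rightarrow> real set \<Rightarrow> (real \<Rightarrow> real) \<Rightarrow> bool" where
  "higher_differentiable_on 0 J f \<longleftrightarrow> (\<forall>t\<in>J. f field_differentiable at t)"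
| "higher_differentiable_on (Suc k) J f \<longleftrightarrow>
     (\<forall>t\<in>J. f field_differentiable at t) \<and> higher_differentiable_on k J (deriv f)"

lemma higher_differentiable_on_iff:
  "higher_differentiable_on k J f \<longleftrightarrow> (\<forall>i\<le>k. \<forall>t\<in>J. (deriv ^^ i) f field_differentiable at t)"
proof (induction k arbitrary: f)
  case (Suc k)
  have split_Suc: "(\<forall>i\<le>Suc k. Q i) \<longleftrightarrow> Q 0 \<and> (\<forall>i\<le>k. Q (Suc i))" for Q :: "nat \<Rightarrow> bool"
    by (metis Suc_le_mono bot_nat_0.not_eq_extremum gr0_conv_Suc zero_le)
  show ?case
    by (simp only: higher_differentiable_on.simps Suc split_Suc funpow_Suc_right funpow_0 o_apply)
qed simp

lemma higher_differentiable_on_differentiable: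
  "higher_differentiable_on k J f \<Longrightarrow> t \<in> J \<Longrightarrow> f field_differentiable at t"
  by (cases k) auto

lemma higher_differentiable_on_SucD:
  "higher_differentiable_on (Suc k) J f \<Longrightarrow> higher_differentiable_on k J f"
  by (induction k arbitrary: f) auto

lemma deriv_cong_on_open:
  assumes "open J" "t \<in> J" "\<And>u. u \<in> J \<Longrightarrow> f u = g u"
  shows "deriv f t = deriv g t"
proof (rule deriv_cong_ev[OF _ refl])
  show "eventually (\<lambda>u. f u = g u) (nhds t)"
    using eventually_nhds_in_open[OF assms(1,2)] by eventually_elim (use assms(3) in auto)
qed

lemma deriv2_cong_on_open:
  assumes "open J" "t \<in> J" "\<And>u. u \<in> J \<Longrightarrow> f u = g u"
  shows "deriv (deriv f) t = deriv (deriv g) t"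
proof (rule deriv_cong_on_open[OF assms(1,2)])
  fix u assume "u \<in> J"
  then show "deriv f u = deriv g u" by (rule deriv_cong_on_open[OF assms(1) _ assms(3)])
qed

lemma field_differentiable_cong_on_open:
  assumes "f field_differentiable at t" "open J" "t \<in> J" "\<And>u. u \<in> J \<Longrightarrow> f u = g u"
  shows "g field_differentiable at t"
proof -
  obtain D where "(f has_field_derivative D) (at t)"
    using assms(1) unfolding field_differentiable_def by blast
  then have "(g has_field_derivative D) (at t)"
    by (rule has_field_derivative_transform_within_open[OF _ assms(2-4)])
  then show ?thesis unfolding field_differentiable_def by blast
qed

lemma higher_differentiable_on_cong:
  assumes "open J"
  shows "higher_differentiable_on k J f \<Longrightarrow> (\<And>u. u \<in> J \<Longrightarrow> f u = g u) \<Longrightarrow>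
    higher_differentiable_on k J g"
proof (induction k arbitrary: f g)
  case 0
  have "g field_differentiable at t" if "t \<in> J" for t
    by (rule field_differentiable_cong_on_open[OF _ assms that, of f]) (use 0 that in auto)
  then show ?case by simp
next
  case (Suc k)
  have "g field_differentiable at t" if "t \<in> J" for t
    by (rule field_differentiable_cong_on_open[OF _ assms that, of f]) (use Suc.prems that in auto)
  moreover have "higher_differentiable_on k J (deriv g)"
  proof (rule Suc.IH[of "deriv f"])
    show "higher_differentiable_on k J (deriv f)" using Suc.prems(1) by simp
    show "deriv f u = deriv g u" if "u \<in> J" for u
      by (rule deriv_cong_on_open[OF assms that Suc.prems(2)])
  qed
  ultimately show ?case by simp
qed

lemma higher_differentiable_on_const: "higher_differentiable_on k J (\<lambda>x. a)"
  by (induction k arbitrary: a) simp_all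

lemma higher_differentiable_on_add:
  assumes "open J"
  shows "higher_differentiable_on k J f \<Longrightarrow> higher_differentiable_on k J g \<Longrightarrow>
    higher_differentiable_on k J (\<lambda>x. f x + g x)"
proof (induction k arbitrary: f g)
  case (Suc k)
  have "higher_differentiable_on k J (\<lambda>x. deriv f x + deriv g x)"
    using Suc.prems by (intro Suc.IH) simp_all
  then have "higher_differentiable_on k J (deriv (\<lambda>x. f x + g x))"
    by (rule higher_differentiable_on_cong[OF assms]) (use Suc.prems in auto)
  with Suc.prems show ?case by (auto intro: field_differentiable_add)
qed (auto intro: field_differentiable_add)

lemma higher_differentiable_on_mult:
  assumes "open J"
  shows "higher_differentiable_on k J f \<Longrightarrow> higher_differentiable_on k J g \<Longrightarrow>
    higher_differentiable_on k J (\<lambda>x. f x * g x)"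
proof (induction k arbitrary: f g)
  case (Suc k)
  have "higher_differentiable_on k J f" "higher_differentiable_on k J g"
    using Suc.prems higher_differentiable_on_SucD by blast+
  moreover have "higher_differentiable_on k J (deriv f)" "higher_differentiable_on k J (deriv g)"
    using Suc.prems by simp_all
  ultimately have "higher_differentiable_on k J (\<lambda>x. f x * deriv g x + deriv f x * g x)"
    by (intro higher_differentiable_on_add[OF assms] Suc.IH)
  then have "higher_differentiable_on k J (deriv (\<lambda>x. f x * g x))"
    by (rule higher_differentiable_on_cong[OF assms]) (use Suc.prems in auto)
  with Suc.prems show ?case by (auto intro: field_differentiable_mult)
qed (auto intro: field_differentiable_mult)

lemma higher_differentiable_on_inverse:
  assumes "open J"
  shows "higher_differentiable_on k J f \<Longrightarrow> (\<And>x. x \<in> J \<Longrightarrow> f x \<noteq> 0) \<Longrightarrow>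
    higher_differentiable_on k J (\<lambda>x. inverse (f x))"
proof (induction k arbitrary: f)
  case (Suc k)
  note mult = higher_differentiable_on_mult[OF assms]
  have "higher_differentiable_on k J (\<lambda>x. inverse (f x))"
    using Suc higher_differentiable_on_SucD by blast
  then have "higher_differentiable_on k J
      (\<lambda>x. (-1) * (deriv f x * (inverse (f x) * inverse (f x))))"
    using Suc.prems by (intro mult higher_differentiable_on_const) auto
  then have "higher_differentiable_on k J (deriv (\<lambda>x. inverse (f x)))"
    by (rule higher_differentiable_on_cong[OF assms])
       (use Suc.prems in \<open>auto simp: power2_eq_square divide_inverse\<close>)
  with Suc.prems show ?case by (auto intro: field_differentiable_inverse)
qed (auto intro: field_differentiable_inverse)

definition smooth_on :: "real set \<Rightarrow> (real \<Rightarrow> real) \<Rightarrow> bool" where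
  "smooth_on J f \<longleftrightarrow> (\<forall>k. higher_differentiable_on k J f)"

lemma smooth_on_iff_higher_deriv:
  "smooth_on J f \<longleftrightarrow> (\<forall>k. \<forall>t\<in>J. ((deriv ^^ k) f) differentiable (at t))"
  by (auto simp: smooth_on_def higher_differentiable_on_iff field_differentiable_def
      real_differentiable_def)

lemma smooth_on_differentiable: "smooth_on J f \<Longrightarrow> t \<in> J \<Longrightarrow> f field_differentiable at t"
  unfolding smooth_on_def using higher_differentiable_on_differentiable by blast

lemma smooth_on_deriv: "smooth_on J f \<Longrightarrow> smooth_on J (deriv f)"
  unfolding smooth_on_def by (metis higher_differentiable_on.simps(2))

lemma smooth_on_const: "smooth_on J (\<lambda>x. a)"
  unfolding smooth_on_def by (simp add: higher_differentiable_on_const)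

lemma smooth_on_higher_deriv: "smooth_on J f \<Longrightarrow> smooth_on J ((deriv ^^ k) f)"
  by (induction k) (simp_all add: smooth_on_deriv)

lemma smooth_on_cong:
  "open J \<Longrightarrow> smooth_on J f \<Longrightarrow> (\<And>u. u \<in> J \<Longrightarrow> f u = g u) \<Longrightarrow> smooth_on J g"
  unfolding smooth_on_def using higher_differentiable_on_cong by blast

lemma smooth_on_add:
  "open J \<Longrightarrow> smooth_on J f \<Longrightarrow> smooth_on J g \<Longrightarrow> smooth_on J (\<lambda>x. f x + g x)"
  unfolding smooth_on_def using higher_differentiable_on_add by blast

lemma smooth_on_mult:
  "open J \<Longrightarrow> smooth_on J f \<Longrightarrow> smooth_on J g \<Longrightarrow> smooth_on J (\<lambda>x. f x * g x)"
  unfolding smooth_on_def using higher_differentiable_on_mult by blast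

lemma smooth_on_inverse:
  "open J \<Longrightarrow> smooth_on J f \<Longrightarrow> (\<And>x. x \<in> J \<Longrightarrow> f x \<noteq> 0) \<Longrightarrow>
    smooth_on J (\<lambda>x. inverse (f x))"
  unfolding smooth_on_def using higher_differentiable_on_inverse by blast

lemma smooth_on_cmult: "open J \<Longrightarrow> smooth_on J f \<Longrightarrow> smooth_on J (\<lambda>x. a * f x)"
  using smooth_on_mult[OF _ smooth_on_const] by blast

lemma smooth_on_diff:
  "open J \<Longrightarrow> smooth_on J f \<Longrightarrow> smooth_on J g \<Longrightarrow> smooth_on J (\<lambda>x. f x - g x)"
  using smooth_on_add[of J f "\<lambda>x. (-1) * g x"] smooth_on_cmult[of J g "-1"] by simp

lemma smooth_on_divide:
  "open J \<Longrightarrow> smooth_on J f \<Longrightarrow> smooth_on J g \<Longrightarrow> (\<And>x. x \<in> J \<Longrightarrow> g x \<noteq> 0) \<Longrightarrow>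
    smooth_on J (\<lambda>x. f x / g x)"
  using smooth_on_mult[of J f "\<lambda>x. inverse (g x)"] smooth_on_inverse by (auto simp: divide_inverse)

lemma smooth_on_power: "open J \<Longrightarrow> smooth_on J f \<Longrightarrow> smooth_on J (\<lambda>x. f x ^ k)"
  by (induction k) (simp_all add: smooth_on_mult smooth_on_const)

lemma smooth_on_sum:
  "open J \<Longrightarrow> (\<And>i. i \<in> S \<Longrightarrow> smooth_on J (f i)) \<Longrightarrow> smooth_on J (\<lambda>x. \<Sum>i\<in>S. f i x)"
proof (induction S rule: infinite_finite_induct)
  case (insert x S)
  then show ?case using smooth_on_add[of J "f x"] by auto
qed (simp_all add: smooth_on_const)

lemma deriv2_cmult_on_open:
  assumes "open J" "t \<in> J" "smooth_on J g"
  shows "deriv (deriv (\<lambda>s. a * g s)) t = a * deriv (deriv g) t"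
proof -
  have "deriv (deriv (\<lambda>s. a * g s)) t = deriv (\<lambda>u. a * deriv g u) t"
    using assms by (intro deriv_cong_on_open) (auto intro: smooth_on_differentiable deriv_cmult)
  also have "\<dots> = a * deriv (deriv g) t"
    using smooth_on_differentiable[OF smooth_on_deriv[OF assms(3)] assms(2)] by simp
  finally show ?thesis .
qed

lemma deriv2_ln:
  assumes "open J" "t \<in> J" "smooth_on J f" "\<And>s. s \<in> J \<Longrightarrow> f s > 0"
  shows "deriv (deriv (\<lambda>s. ln (f s))) t = (f t * deriv (deriv f) t - (deriv f t)\<^sup>2) / (f t)\<^sup>2"
proof -
  have "deriv (\<lambda>s. ln (f s)) u = deriv f u / f u" if "u \<in> J" for u
  proof -
    have "DERIV f u :> deriv f u"
      using smooth_on_differentiable[OF assms(3) that] DERIV_deriv_iff_field_differentiable by blast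
    then have "DERIV (\<lambda>s. ln (f s)) u :> deriv f u / f u"
      using assms(4)[OF that] by (auto intro!: derivative_eq_intros)
    then show ?thesis by (rule DERIV_imp_deriv)
  qed
  then have "deriv (deriv (\<lambda>s. ln (f s))) t = deriv (\<lambda>u. deriv f u / f u) t"
    by (rule deriv_cong_on_open[OF assms(1,2)])
  also have "\<dots> = (f t * deriv (deriv f) t - (deriv f t)\<^sup>2) / (f t)\<^sup>2"
    using smooth_on_differentiable[OF assms(3,2)] assms(4)[OF assms(2)]
      smooth_on_differentiable[OF smooth_on_deriv[OF assms(3)] assms(2)]
    by (simp add: power2_eq_square algebra_simps)
  finally show ?thesis .
qed

section \<open>Power series with smoothly varying coefficients\<close>

definition fps_param_deriv :: "(real \<Rightarrow> real fps) \<Rightarrow> real \<Rightarrow> real fps" where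
  "fps_param_deriv A t = Abs_fps (\<lambda>k. deriv (\<lambda>u. A u $ k) t)"

definition smooth_fps_on :: "real set \<Rightarrow> (real \<Rightarrow> real fps) \<Rightarrow> bool" where
  "smooth_fps_on J A \<longleftrightarrow> (\<forall>k. smooth_on J (\<lambda>u. A u $ k))"

lemma fps_param_deriv_nth [simp]: "fps_param_deriv A t $ k = deriv (\<lambda>u. A u $ k) t"
  by (simp add: fps_param_deriv_def)

lemma smooth_fps_onD: "smooth_fps_on J A \<Longrightarrow> smooth_on J (\<lambda>u. A u $ k)"
  by (simp add: smooth_fps_on_def)

lemma smooth_fps_on_differentiable:
  "smooth_fps_on J A \<Longrightarrow> t \<in> J \<Longrightarrow> (\<lambda>u. A u $ k) field_differentiable at t"
  by (rule smooth_on_differentiable[OF smooth_fps_onD])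

lemma smooth_fps_on_cong:
  assumes "open J" "smooth_fps_on J A" "\<And>u. u \<in> J \<Longrightarrow> A u = B u"
  shows "smooth_fps_on J B"
  unfolding smooth_fps_on_def
proof
  fix k
  show "smooth_on J (\<lambda>u. B u $ k)"
    by (rule smooth_on_cong[OF assms(1) smooth_fps_onD[OF assms(2)]]) (simp add: assms(3))
qed

lemma smooth_fps_on_Abs_fps: "(\<And>k. smooth_on J (f k)) \<Longrightarrow> smooth_fps_on J (\<lambda>u. Abs_fps (\<lambda>k. f k u))"
  by (simp add: smooth_fps_on_def)

lemma smooth_fps_on_const: "smooth_fps_on J (\<lambda>u. A)"
  by (simp add: smooth_fps_on_def smooth_on_const)

lemma smooth_fps_on_fps_const: "smooth_on J f \<Longrightarrow> smooth_fps_on J (\<lambda>u. fps_const (f u))"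
  unfolding smooth_fps_on_def
proof
  fix k assume "smooth_on J f"
  then show "smooth_on J (\<lambda>u. fps_const (f u) $ k)"
    by (cases "k = 0") (simp_all add: smooth_on_const)
qed

lemma smooth_fps_on_add:
  "open J \<Longrightarrow> smooth_fps_on J A \<Longrightarrow> smooth_fps_on J B \<Longrightarrow> smooth_fps_on J (\<lambda>u. A u + B u)"
  by (simp add: smooth_fps_on_def smooth_on_add)

lemma smooth_fps_on_diff:
  "open J \<Longrightarrow> smooth_fps_on J A \<Longrightarrow> smooth_fps_on J B \<Longrightarrow> smooth_fps_on J (\<lambda>u. A u - B u)"
  by (simp add: smooth_fps_on_def smooth_on_diff)

lemma smooth_fps_on_mult:
  "open J \<Longrightarrow> smooth_fps_on J A \<Longrightarrow> smooth_fps_on J B \<Longrightarrow> smooth_fps_on J (\<lambda>u. A u * B u)"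
  unfolding smooth_fps_on_def fps_mult_nth by (auto intro!: smooth_on_sum smooth_on_mult)

lemma smooth_fps_on_power: "open J \<Longrightarrow> smooth_fps_on J A \<Longrightarrow> smooth_fps_on J (\<lambda>u. A u ^ n)"
  by (induction n) (simp_all add: smooth_fps_on_mult smooth_fps_on_const)

lemma smooth_fps_on_param_deriv: "smooth_fps_on J A \<Longrightarrow> smooth_fps_on J (fps_param_deriv A)"
  by (simp add: smooth_fps_on_def smooth_on_deriv)

lemma smooth_fps_on_fps_deriv:
  "open J \<Longrightarrow> smooth_fps_on J A \<Longrightarrow> smooth_fps_on J (\<lambda>u. fps_deriv (A u))"
  by (simp add: smooth_fps_on_def smooth_on_cmult)

lemma smooth_fps_on_compose:
  "open J \<Longrightarrow> smooth_fps_on J A \<Longrightarrow> smooth_fps_on J (\<lambda>u. C oo A u)"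
  unfolding smooth_fps_on_def fps_compose_nth
  by (auto intro!: smooth_on_sum smooth_on_cmult smooth_fps_on_power[unfolded smooth_fps_on_def, rule_format])

lemma smooth_fps_on_inverse:
  assumes open_J: "open J" and A: "smooth_fps_on J A" and A0: "\<And>u. u \<in> J \<Longrightarrow> A u $ 0 \<noteq> 0"
  shows "smooth_fps_on J (\<lambda>u. inverse (A u))"
proof -
  have inv0: "smooth_on J (\<lambda>u. inverse (A u $ 0))"
    using smooth_on_inverse[OF open_J smooth_fps_onD[OF A] A0] .
  have "smooth_on J (\<lambda>u. inverse (A u) $ n)" for n
  proof (induction n rule: less_induct)
    case (less n)
    show ?case
    proof (cases n)
      case 0
      then show ?thesis using inv0 by (simp add: fps_inverse_def)
    next
      case (Suc m)
      then have "(\<lambda>u. inverse (A u) $ n) =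
          (\<lambda>u. - inverse (A u $ 0) * (\<Sum>i\<in>{1..n}. A u $ i * inverse (A u) $ (n - i)))"
        by (simp add: fps_inverse_def)
      moreover have "smooth_on J
          (\<lambda>u. - inverse (A u $ 0) * (\<Sum>i\<in>{1..n}. A u $ i * inverse (A u) $ (n - i)))"
        using open_J inv0 A less Suc
        by (intro smooth_on_mult smooth_on_cmult[of J _ "-1", simplified] smooth_on_sum)
           (auto intro: smooth_fps_onD)
      ultimately show ?thesis by simp
    qed
  qed
  then show ?thesis by (simp add: smooth_fps_on_def)
qed

lemma fps_param_deriv_cong:
  assumes "open J" "t \<in> J" "\<And>u. u \<in> J \<Longrightarrow> A u = B u"
  shows "fps_param_deriv A t = fps_param_deriv B t"
proof (intro fps_ext)
  fix k
  show "fps_param_deriv A t $ k = fps_param_deriv B t $ k"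
    using deriv_cong_on_open[OF assms(1,2), of "\<lambda>u. A u $ k" "\<lambda>u. B u $ k"] assms(3) by simp
qed

lemma fps_param_deriv_const [simp]: "fps_param_deriv (\<lambda>u. A) t = 0"
  by (intro fps_ext) simp

lemma fps_param_deriv_fps_const [simp]:
  "fps_param_deriv (\<lambda>u. fps_const (f u)) t = fps_const (deriv f t)"
  by (intro fps_ext) simp

lemma fps_param_deriv_add:
  "smooth_fps_on J A \<Longrightarrow> smooth_fps_on J B \<Longrightarrow> t \<in> J \<Longrightarrow>
    fps_param_deriv (\<lambda>u. A u + B u) t = fps_param_deriv A t + fps_param_deriv B t"
  by (intro fps_ext) (simp add: smooth_fps_on_differentiable)

lemma fps_param_deriv_mult:
  assumes "smooth_fps_on J A" "smooth_fps_on J B" "t \<in> J"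
  shows "fps_param_deriv (\<lambda>u. A u * B u) t =
    fps_param_deriv A t * B t + A t * fps_param_deriv B t"
proof (intro fps_ext)
  fix k
  have "fps_param_deriv (\<lambda>u. A u * B u) t $ k = deriv (\<lambda>u. \<Sum>i\<le>k. A u $ i * B u $ (k - i)) t"
    by (simp add: fps_mult_nth atLeast0AtMost)
  also have "\<dots> = (\<Sum>i\<le>k. deriv (\<lambda>u. A u $ i * B u $ (k - i)) t)"
    using assms by (intro deriv_sum field_differentiable_mult smooth_fps_on_differentiable)
  also have "\<dots> = (\<Sum>i\<le>k. fps_param_deriv A t $ i * B t $ (k - i) + A t $ i * fps_param_deriv B t $ (k - i))"
    using assms by (intro sum.cong refl) (simp add: smooth_fps_on_differentiable)
  also have "\<dots> = (fps_param_deriv A t * B t + A t * fps_param_deriv B t) $ k"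
    by (simp add: fps_mult_nth sum.distrib atLeast0AtMost)
  finally show "fps_param_deriv (\<lambda>u. A u * B u) t $ k = \<dots>" .
qed

lemma fps_param_deriv_fps_deriv:
  "smooth_fps_on J A \<Longrightarrow> t \<in> J \<Longrightarrow>
    fps_param_deriv (\<lambda>u. fps_deriv (A u)) t = fps_deriv (fps_param_deriv A t)"
  by (intro fps_ext) (simp add: smooth_fps_on_differentiable)

lemma fps_param_deriv_inverse:
  assumes open_J: "open J" and A: "smooth_fps_on J A" and A0: "\<And>u. u \<in> J \<Longrightarrow> A u $ 0 \<noteq> 0"
    and t: "t \<in> J"
  shows "fps_param_deriv (\<lambda>u. inverse (A u)) t = - fps_param_deriv A t * (inverse (A t))\<^sup>2"
proof -
  let ?dI = "fps_param_deriv (\<lambda>u. inverse (A u)) t"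
  have "fps_param_deriv (\<lambda>u. A u * inverse (A u)) t = fps_param_deriv (\<lambda>u. 1) t"
    using open_J t A0 by (intro fps_param_deriv_cong) (auto intro: inverse_mult_eq_1')
  then have "fps_param_deriv A t * inverse (A t) + A t * ?dI = 0"
    using fps_param_deriv_mult[OF A smooth_fps_on_inverse[OF open_J A A0] t] by simp
  then have dI: "A t * ?dI = - (fps_param_deriv A t * inverse (A t))"
    by (simp add: eq_neg_iff_add_eq_0 add.commute)
  have "inverse (A t) * A t = 1"
    using A0[OF t] by (rule inverse_mult_eq_1)
  then have "?dI = inverse (A t) * (A t * ?dI)"
    by (simp flip: mult.assoc)
  also have "\<dots> = - fps_param_deriv A t * (inverse (A t))\<^sup>2"
    unfolding dI by (simp add: power2_eq_square algebra_simps)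
  finally show ?thesis .
qed

section \<open>The second logarithmic derivative of a 1/N-series\<close>

lemma fps_deriv_ln_compose:
  fixes H :: "'a::field_char_0 fps"
  assumes "H $ 0 = 0"
  shows "fps_deriv (fps_ln 1 oo H) = inverse (1 + H) * fps_deriv H"
proof -
  have "fps_deriv (fps_ln 1 oo H) = (fps_deriv (fps_ln 1) oo H) * fps_deriv H"
    using assms by (rule fps_compose_deriv)
  also have "fps_deriv (fps_ln (1::'a)) = inverse (1 + fps_X)"
    by (simp add: fps_ln_deriv)
  also have "inverse (1 + fps_X) oo H = inverse ((1 + fps_X) oo H)"
    using assms by (intro fps_inverse_compose) auto
  also have "(1 + fps_X) oo H = 1 + H"
    using assms by (simp add: fps_compose_add_distrib)
  finally show ?thesis .
qed

lemma fps_param_deriv_ln_compose: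
  assumes open_J: "open J" and H: "smooth_fps_on J H" and H0: "\<And>u. H u $ 0 = 0" and t: "t \<in> J"
  shows "fps_param_deriv (\<lambda>u. fps_ln 1 oo H u) t = fps_param_deriv H t * inverse (1 + H t)"
    (is "?lhs = ?rhs")
proof -
  have H1: "smooth_fps_on J (\<lambda>u. 1 + H u)"
    by (intro smooth_fps_on_add[OF open_J] smooth_fps_on_const H)
  have H1_0: "\<And>u. u \<in> J \<Longrightarrow> (1 + H u) $ 0 \<noteq> 0"
    using H0 by simp
  have "fps_deriv ?lhs = fps_param_deriv (\<lambda>u. fps_deriv (fps_ln 1 oo H u)) t"
    using fps_param_deriv_fps_deriv[OF smooth_fps_on_compose[OF open_J H] t] by simp
  also have "\<dots> = fps_param_deriv (\<lambda>u. inverse (1 + H u) * fps_deriv (H u)) t"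
    using H0 by (simp add: fps_deriv_ln_compose)
  also have "\<dots> = - fps_param_deriv H t * (inverse (1 + H t))\<^sup>2 * fps_deriv (H t)
      + inverse (1 + H t) * fps_deriv (fps_param_deriv H t)"
    using fps_param_deriv_mult[OF smooth_fps_on_inverse[OF open_J H1 H1_0]
        smooth_fps_on_fps_deriv[OF open_J H] t]
      fps_param_deriv_inverse[OF open_J H1 H1_0 t] fps_param_deriv_add[OF smooth_fps_on_const H t]
      fps_param_deriv_fps_deriv[OF H t]
    by simp
  also have "\<dots> = fps_deriv ?rhs"
    using fps_inverse_deriv[of "1 + H t"] H0[of t] by (simp add: algebra_simps)
  finally have "fps_deriv ?lhs = fps_deriv ?rhs" .
  then have "?lhs = fps_const (?lhs $ 0 - ?rhs $ 0) + ?rhs"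
    by (simp only: fps_deriv_eq_iff)
  moreover have "?lhs $ 0 = 0" "?rhs $ 0 = 0"
    by (simp_all add: fps_ln_nth H0)
  ultimately show ?thesis
    by simp
qed

(* With G_n and H_n as in the header, G_n = shift_fps (lcoef F n) and
   H_n = shift_fps_tail (lcoef F n), so that mcoef F n p is the p-th coefficient of log (1 + H_n). *)

definition shift_fps :: "(nat \<Rightarrow> real \<Rightarrow> real) \<Rightarrow> real \<Rightarrow> real fps" where
  "shift_fps c t = Abs_fps (\<lambda>k. c (Suc k) t)"

definition shift_fps_tail :: "(nat \<Rightarrow> real \<Rightarrow> real) \<Rightarrow> real \<Rightarrow> real fps" where
  "shift_fps_tail c t = Abs_fps (\<lambda>k. if k = 0 then 0 else c (Suc k) t / c 1 t)"

lemma shift_fps_eq_tail: "c 1 t \<noteq> 0 \<Longrightarrow> shift_fps c t = fps_const (c 1 t) * (1 + shift_fps_tail c t)"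
  by (intro fps_ext) (simp add: shift_fps_def shift_fps_tail_def)

lemma dlog_ser_eq_shift_fps:
  "dlog_ser c t = (shift_fps c t * fps_param_deriv (fps_param_deriv (shift_fps c)) t
     - (fps_param_deriv (shift_fps c) t)\<^sup>2) / (shift_fps c t)\<^sup>2"
  by (simp add: dlog_ser_def Let_def shift_fps_def fps_param_deriv_def)

lemma dlog_ser_nth_0:
  "c 1 t \<noteq> 0 \<Longrightarrow>
    dlog_ser c t $ 0 = (c 1 t * deriv (deriv (c 1)) t - (deriv (c 1) t)\<^sup>2) / (c 1 t)\<^sup>2"
  by (simp add: dlog_ser_def Let_def fps_divide_unit power2_eq_square fps_inverse_def divide_inverse)

context
  fixes J :: "real set" and c :: "nat \<Rightarrow> real \<Rightarrow> real"
  assumes open_J: "open J" and smooth_c: "\<And>k. smooth_on J (c k)"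
    and c1_nonzero: "\<And>t. t \<in> J \<Longrightarrow> c 1 t \<noteq> 0"
begin

lemma smooth_fps_on_shift_fps: "smooth_fps_on J (shift_fps c)"
  unfolding shift_fps_def by (rule smooth_fps_on_Abs_fps) (rule smooth_c)

lemma shift_fps_nth_0_nonzero: "t \<in> J \<Longrightarrow> shift_fps c t $ 0 \<noteq> 0"
  using c1_nonzero by (simp add: shift_fps_def One_nat_def)

lemma smooth_fps_on_shift_fps_tail: "smooth_fps_on J (shift_fps_tail c)"
  unfolding shift_fps_tail_def
proof (rule smooth_fps_on_Abs_fps)
  fix k
  show "smooth_on J (\<lambda>t. if k = 0 then 0 else c (Suc k) t / c 1 t)"
    using smooth_on_divide[OF open_J smooth_c[of "Suc k"] smooth_c[of 1] c1_nonzero]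
    by (cases "k = 0") (simp_all add: smooth_on_const)
qed

lemma smooth_fps_on_dlog_ser: "smooth_fps_on J (dlog_ser c)"
proof -
  let ?G = "shift_fps c"
  have G2_0: "\<And>t. t \<in> J \<Longrightarrow> (?G t ^ 2) $ 0 \<noteq> 0"
    using shift_fps_nth_0_nonzero by (simp add: power2_eq_square)
  have "smooth_fps_on J (\<lambda>t. (?G t * fps_param_deriv (fps_param_deriv ?G) t
      - (fps_param_deriv ?G t)\<^sup>2) * inverse (?G t ^ 2))"
    by (intro smooth_fps_on_mult[OF open_J] smooth_fps_on_diff[OF open_J] smooth_fps_on_power[OF open_J]
        smooth_fps_on_inverse[OF open_J] smooth_fps_on_param_deriv smooth_fps_on_shift_fps G2_0)
  then show ?thesis
    by (rule smooth_fps_on_cong[OF open_J]) (simp add: dlog_ser_eq_shift_fps fps_divide_unit[OF G2_0])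
qed

lemma dlog_ser_eq_param_deriv_log_deriv:
  assumes t: "t \<in> J"
  shows "dlog_ser c t =
    fps_param_deriv (\<lambda>s. fps_param_deriv (shift_fps c) s * inverse (shift_fps c s)) t"
proof -
  let ?G = "shift_fps c" and ?dG = "fps_param_deriv (shift_fps c)"
  have G0: "\<And>s. s \<in> J \<Longrightarrow> ?G s $ 0 \<noteq> 0"
    by (rule shift_fps_nth_0_nonzero)
  have inv: "inverse (?G t) * ?G t = 1"
    using G0[OF t] by (rule inverse_mult_eq_1)
  have "dlog_ser c t = (?G t * fps_param_deriv ?dG t - (?dG t)\<^sup>2) * (inverse (?G t))\<^sup>2"
    using G0[OF t]
    by (simp add: dlog_ser_eq_shift_fps fps_divide_unit power2_eq_square fps_inverse_mult)
  also have "\<dots> = fps_param_deriv ?dG t * inverse (?G t) + ?dG t * (- ?dG t * (inverse (?G t))\<^sup>2)"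
  proof -
    have "fps_param_deriv ?dG t * inverse (?G t) =
        ?G t * fps_param_deriv ?dG t * (inverse (?G t))\<^sup>2"
      using inv by (simp add: power2_eq_square algebra_simps)
    then show ?thesis by (simp add: algebra_simps power2_eq_square)
  qed
  also have "\<dots> = fps_param_deriv (\<lambda>s. ?dG s * inverse (?G s)) t"
    using fps_param_deriv_mult[OF smooth_fps_on_param_deriv smooth_fps_on_inverse[OF open_J _ G0] t]
      fps_param_deriv_inverse[OF open_J _ G0 t] smooth_fps_on_shift_fps
    by simp
  finally show ?thesis .
qed

lemma log_deriv_shift_fps:
  assumes t: "t \<in> J"
  shows "fps_param_deriv (shift_fps c) t * inverse (shift_fps c t) =
    fps_const (deriv (c 1) t / c 1 t) + fps_param_deriv (\<lambda>u. fps_ln 1 oo shift_fps_tail c u) t"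
proof -
  let ?H = "shift_fps_tail c"
  have H: "smooth_fps_on J ?H" and H0: "\<And>u. ?H u $ 0 = 0"
    by (simp_all add: smooth_fps_on_shift_fps_tail shift_fps_tail_def)
  have H1: "smooth_fps_on J (\<lambda>u. 1 + ?H u)"
    by (intro smooth_fps_on_add[OF open_J] smooth_fps_on_const H)
  have "fps_param_deriv (shift_fps c) t = fps_param_deriv (\<lambda>u. fps_const (c 1 u) * (1 + ?H u)) t"
    using c1_nonzero by (intro fps_param_deriv_cong[OF open_J t]) (simp add: shift_fps_eq_tail)
  also have "\<dots> = fps_const (deriv (c 1) t) * (1 + ?H t) + fps_const (c 1 t) * fps_param_deriv ?H t"
    using fps_param_deriv_mult[OF smooth_fps_on_fps_const[OF smooth_c] H1 t]
      fps_param_deriv_add[OF smooth_fps_on_const H t]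
    by simp
  finally have dG: "fps_param_deriv (shift_fps c) t = \<dots>" .
  have invG: "inverse (shift_fps c t) = fps_const (inverse (c 1 t)) * inverse (1 + ?H t)"
    using c1_nonzero[OF t] H0[of t]
    by (simp add: shift_fps_eq_tail fps_inverse_mult fps_const_inverse)
  have inv_H1: "(1 + ?H t) * inverse (1 + ?H t) = 1"
    using H0[of t] by (intro inverse_mult_eq_1') simp
  have inv_c1: "fps_const (c 1 t) * fps_const (inverse (c 1 t)) = 1"
    using c1_nonzero[OF t] by (simp flip: fps_const_mult)
  have "fps_param_deriv (shift_fps c) t * inverse (shift_fps c t) =
      fps_const (deriv (c 1) t) * fps_const (inverse (c 1 t)) * ((1 + ?H t) * inverse (1 + ?H t))
      + (fps_const (c 1 t) * fps_const (inverse (c 1 t))) * (fps_param_deriv ?H t * inverse (1 + ?H t))"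
    unfolding dG invG by (simp add: algebra_simps)
  also have "\<dots> = fps_const (deriv (c 1) t / c 1 t) + fps_param_deriv ?H t * inverse (1 + ?H t)"
    unfolding inv_H1 inv_c1 by (simp add: fps_const_mult divide_inverse)
  also have "fps_param_deriv ?H t * inverse (1 + ?H t) = fps_param_deriv (\<lambda>u. fps_ln 1 oo ?H u) t"
    by (rule fps_param_deriv_ln_compose[OF open_J H H0 t, symmetric])
  finally show ?thesis .
qed

lemma dlog_ser_nth_pos:
  assumes t: "t \<in> J" and q: "0 < q"
  shows "dlog_ser c t $ q = deriv (deriv (\<lambda>s. (fps_ln 1 oo shift_fps_tail c s) $ q)) t"
proof -
  let ?L = "\<lambda>s. fps_ln 1 oo shift_fps_tail c s"
  have log_deriv_c1: "smooth_on J (\<lambda>s. deriv (c 1) s / c 1 s)"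
    by (rule smooth_on_divide[OF open_J smooth_on_deriv[OF smooth_c] smooth_c c1_nonzero])
  have L: "smooth_fps_on J (fps_param_deriv ?L)"
    by (intro smooth_fps_on_param_deriv smooth_fps_on_compose[OF open_J] smooth_fps_on_shift_fps_tail)
  have "dlog_ser c t =
      fps_param_deriv (\<lambda>s. fps_const (deriv (c 1) s / c 1 s) + fps_param_deriv ?L s) t"
    unfolding dlog_ser_eq_param_deriv_log_deriv[OF t]
    by (intro fps_param_deriv_cong[OF open_J t] log_deriv_shift_fps)
  also have "\<dots> = fps_const (deriv (\<lambda>s. deriv (c 1) s / c 1 s) t) +
      fps_param_deriv (fps_param_deriv ?L) t"
    using fps_param_deriv_add[OF smooth_fps_on_fps_const[OF log_deriv_c1] L t] by simp
  finally show ?thesis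
    using q by simp
qed

end

declare lcoef.simps [simp del]

lemma lcoef_1: "1 \<le> n \<Longrightarrow> lcoef F n 1 t = real n * (deriv ^^ 2) F t"
  by (simp add: lcoef.simps numeral_2_eq_2)

lemma lcoef_rec:
  "1 \<le> n \<Longrightarrow> 2 \<le> p \<Longrightarrow>
    lcoef F n p t = (\<Sum>j\<in>{1..<n}. real j * dlog_ser (lcoef F (n - j)) t $ (p - 2))"
  by (simp add: lcoef.simps)

lemma mcoef_eq: "mcoef F n q = (\<lambda>t. (fps_ln 1 oo shift_fps_tail (lcoef F n) t) $ q)"
  by (simp add: mcoef_def shift_fps_tail_def fun_eq_iff)

lemma mcoef_1: "mcoef F n 1 t = lcoef F n 2 t / lcoef F n 1 t"
  by (simp add: mcoef_def fps_compose_nth fps_ln_nth numeral_2_eq_2)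

lemma sum_of_nat_atLeast1_lessThan: "(\<Sum>j\<in>{1..<n}. real j) = real n * (real n - 1) / 2"
  by (induction n) (auto simp: sum.op_ivl_Suc field_simps)

lemma sum_of_nat_times_gap:
  "(\<Sum>j\<in>{1..<n}. real j * (real (n - j) - 1)) = real n * (real n - 1) * (real n - 2) / 6"
proof -
  have squares: "(\<Sum>j\<in>{1..<n}. real j ^ 2) = (real n - 1) * real n * (2 * real n - 1) / 6"
    by (induction n) (auto simp: sum.op_ivl_Suc field_simps power2_eq_square)
  have "(\<Sum>j\<in>{1..<n}. real j * (real (n - j) - 1)) = (\<Sum>j\<in>{1..<n}. (real n - 1) * real j - real j ^ 2)"
    by (intro sum.cong refl) (auto simp: of_nat_diff algebra_simps power2_eq_square)
  also have "\<dots> = (real n - 1) * (\<Sum>j\<in>{1..<n}. real j) - (\<Sum>j\<in>{1..<n}. real j ^ 2)"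
    by (simp add: sum_subtractf sum_distrib_left)
  also have "\<dots> = real n * (real n - 1) * (real n - 2) / 6"
    unfolding sum_of_nat_atLeast1_lessThan squares by (simp add: field_simps)
  finally show ?thesis .
qed

context
  fixes F :: "real \<Rightarrow> real" and J :: "real set"
  assumes open_J: "open J" and smooth_F: "smooth_on J F"
    and F2_pos: "\<And>t. t \<in> J \<Longrightarrow> (deriv ^^ 2) F t > 0"
begin

lemma lcoef_1_pos: "1 \<le> m \<Longrightarrow> t \<in> J \<Longrightarrow> lcoef F m 1 t > 0"
  using F2_pos[of t] lcoef_1[of m F t] by simp

lemma smooth_on_lcoef: "smooth_on J (lcoef F n p)"
proof (induction n arbitrary: p rule: less_induct)
  case (less n)
  consider "n = 0 \<or> p = 0" | "1 \<le> n" "p = 1" | "1 \<le> n" "2 \<le> p"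
    by linarith
  then show ?case
  proof cases
    case 1
    then have "lcoef F n p = (\<lambda>t. 0)"
      by (auto simp: lcoef.simps)
    then show ?thesis by (simp add: smooth_on_const)
  next
    case 2
    then have "lcoef F n p = (\<lambda>t. real n * (deriv ^^ 2) F t)"
      using lcoef_1[of n F] by (simp add: fun_eq_iff)
    then show ?thesis
      using smooth_on_cmult[OF open_J smooth_on_higher_deriv[OF smooth_F]] by simp
  next
    case 3
    have "smooth_on J (\<lambda>t. \<Sum>j\<in>{1..<n}. real j * dlog_ser (lcoef F (n - j)) t $ (p - 2))"
    proof (intro smooth_on_sum[OF open_J] smooth_on_cmult[OF open_J] smooth_fps_onD
        smooth_fps_on_dlog_ser[OF open_J])
      fix j k t assume "j \<in> {1..<n}"
      then show "smooth_on J (lcoef F (n - j) k)" by (intro less) auto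
      assume "t \<in> J"
      moreover from \<open>j \<in> {1..<n}\<close> have "1 \<le> n - j" by auto
      ultimately show "lcoef F (n - j) 1 t \<noteq> 0"
        using lcoef_1_pos by (metis less_irrefl)
    qed
    then show ?thesis
      using 3 by (simp add: lcoef_rec)
  qed
qed

lemma lcoef_2_hierarchy:
  assumes "1 \<le> n" "t \<in> J"
  shows "lcoef F n 2 t = (\<Sum>j\<in>{1..<n}. real j * deriv (deriv (\<lambda>s. ln (lcoef F (n - j) 1 s))) t)"
  unfolding lcoef_rec[OF assms(1) order_refl]
proof (intro sum.cong refl arg_cong[where f = "(*) _"])
  fix j assume "j \<in> {1..<n}"
  then have pos: "\<And>s. s \<in> J \<Longrightarrow> lcoef F (n - j) 1 s > 0"
    by (intro lcoef_1_pos) auto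
  show "dlog_ser (lcoef F (n - j)) t $ (2 - 2) = deriv (deriv (\<lambda>s. ln (lcoef F (n - j) 1 s))) t"
    using dlog_ser_nth_0[of "lcoef F (n - j)" t] pos[OF assms(2)]
      deriv2_ln[OF open_J assms(2) smooth_on_lcoef pos]
    by simp
qed

lemma lcoef_hierarchy:
  assumes "1 \<le> n" "3 \<le> p" "t \<in> J"
  shows "lcoef F n p t = (\<Sum>j\<in>{1..<n}. real j * deriv (deriv (mcoef F (n - j) (p - 2))) t)"
proof -
  have "lcoef F n p t = (\<Sum>j\<in>{1..<n}. real j * dlog_ser (lcoef F (n - j)) t $ (p - 2))"
    using assms by (intro lcoef_rec) auto
  also have "\<dots> = (\<Sum>j\<in>{1..<n}. real j * deriv (deriv (mcoef F (n - j) (p - 2))) t)"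
  proof (intro sum.cong refl arg_cong[where f = "(*) _"])
    fix j assume "j \<in> {1..<n}"
    then have "\<And>s. s \<in> J \<Longrightarrow> lcoef F (n - j) 1 s \<noteq> 0"
      using lcoef_1_pos[of "n - j"] by fastforce
    then show "dlog_ser (lcoef F (n - j)) t $ (p - 2) = deriv (deriv (mcoef F (n - j) (p - 2))) t"
      using dlog_ser_nth_pos[OF open_J smooth_on_lcoef _ assms(3)] assms(2)
      by (simp add: mcoef_eq)
  qed
  finally show ?thesis .
qed

lemma deriv2_ln_lcoef_1:
  assumes "1 \<le> m" "t \<in> J"
  shows "deriv (deriv (\<lambda>s. ln (lcoef F m 1 s))) t =
    ((deriv ^^ 2) F t * (deriv ^^ 4) F t - ((deriv ^^ 3) F t)\<^sup>2) / ((deriv ^^ 2) F t)\<^sup>2"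
proof -
  define f2 where "f2 = (deriv ^^ 2) F"
  have f2: "smooth_on J f2" "\<And>s. s \<in> J \<Longrightarrow> f2 s > 0"
    using smooth_on_higher_deriv[OF smooth_F] F2_pos by (simp_all add: f2_def)
  have lcoef_m1: "lcoef F m 1 = (\<lambda>s. real m * f2 s)"
    using assms(1) lcoef_1[of m F] by (simp add: f2_def fun_eq_iff)
  have "deriv (deriv (\<lambda>s. ln (real m * f2 s))) t =
      (real m * f2 t * (real m * deriv (deriv f2) t) - (real m * deriv f2 t)\<^sup>2) / (real m * f2 t)\<^sup>2"
    using deriv2_ln[OF open_J assms(2) smooth_on_cmult[OF open_J f2(1)]] f2(2) assms(1)
      deriv2_cmult_on_open[OF open_J assms(2) f2(1)] smooth_on_differentiable[OF f2(1) assms(2)]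
    by simp
  also have "\<dots> = (f2 t * deriv (deriv f2) t - (deriv f2 t)\<^sup>2) / (f2 t)\<^sup>2"
    using assms(1) f2(2)[OF assms(2)] by (simp add: field_simps power2_eq_square)
  finally show ?thesis
    unfolding lcoef_m1 by (simp add: f2_def eval_nat_numeral)
qed

lemma lcoef_2_closed_form:
  assumes "1 \<le> n" "t \<in> J"
  shows "lcoef F n 2 t = 1/2 * real n * (real n - 1) *
    (((deriv ^^ 2) F t * (deriv ^^ 4) F t - ((deriv ^^ 3) F t)\<^sup>2) / ((deriv ^^ 2) F t)\<^sup>2)"
proof -
  have "lcoef F n 2 t = (\<Sum>j\<in>{1..<n}. real j) *
      (((deriv ^^ 2) F t * (deriv ^^ 4) F t - ((deriv ^^ 3) F t)\<^sup>2) / ((deriv ^^ 2) F t)\<^sup>2)"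
    unfolding lcoef_2_hierarchy[OF assms] sum_distrib_right
  proof (intro sum.cong refl arg_cong[where f = "(*) _"])
    fix j assume "j \<in> {1..<n}"
    then have "1 \<le> n - j" by auto
    then show "deriv (deriv (\<lambda>s. ln (lcoef F (n - j) 1 s))) t =
        ((deriv ^^ 2) F t * (deriv ^^ 4) F t - ((deriv ^^ 3) F t)\<^sup>2) / ((deriv ^^ 2) F t)\<^sup>2"
      using assms(2) by (rule deriv2_ln_lcoef_1)
  qed
  then show ?thesis
    unfolding sum_of_nat_atLeast1_lessThan by simp
qed

lemma mcoef_1_closed_form:
  assumes "1 \<le> m" "t \<in> J"
  shows "mcoef F m 1 t = (real m - 1) / 2 *
    (((deriv ^^ 2) F t * (deriv ^^ 4) F t - ((deriv ^^ 3) F t)\<^sup>2) / ((deriv ^^ 2) F t) ^ 3)"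
  using F2_pos[OF assms(2)] assms(1)
  unfolding mcoef_1 lcoef_2_closed_form[OF assms] lcoef_1[OF assms(1)]
  by (simp add: numeral_2_eq_2 field_simps power2_eq_square power3_eq_cube)

lemma lcoef_3_closed_form:
  assumes "1 \<le> n" "t \<in> J"
  shows "lcoef F n 3 t = 1/12 * real n * (real n - 1) * (real n - 2) *
    deriv (deriv (\<lambda>s. ((deriv ^^ 2) F s * (deriv ^^ 4) F s - ((deriv ^^ 3) F s)\<^sup>2)
                      / ((deriv ^^ 2) F s) ^ 3)) t"
proof -
  define E where "E = (\<lambda>s. ((deriv ^^ 2) F s * (deriv ^^ 4) F s - ((deriv ^^ 3) F s)\<^sup>2)
    / ((deriv ^^ 2) F s) ^ 3)"
  have E: "smooth_on J E"
    unfolding E_def using F2_pos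
    by (intro smooth_on_divide[OF open_J] smooth_on_diff[OF open_J] smooth_on_mult[OF open_J]
        smooth_on_power[OF open_J] smooth_on_higher_deriv[OF smooth_F]) force+
  have "lcoef F n 3 t = (\<Sum>j\<in>{1..<n}. real j * deriv (deriv (\<lambda>s. (real (n - j) - 1) / 2 * E s)) t)"
    unfolding lcoef_hierarchy[OF assms(1) order_refl assms(2)]
  proof (intro sum.cong refl arg_cong[where f = "(*) _"] deriv2_cong_on_open[OF open_J assms(2)])
    fix j u assume "j \<in> {1..<n}" "u \<in> J"
    then have "1 \<le> n - j" by auto
    then show "mcoef F (n - j) (3 - 2) u = (real (n - j) - 1) / 2 * E u"
      unfolding E_def using mcoef_1_closed_form \<open>u \<in> J\<close> by simp
  qed
  also have "\<dots> = (\<Sum>j\<in>{1..<n}. real j * ((real (n - j) - 1) / 2 * deriv (deriv E) t))"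
    by (simp only: deriv2_cmult_on_open[OF open_J assms(2) E])
  also have "\<dots> = (\<Sum>j\<in>{1..<n}. real j * (real (n - j) - 1)) * (deriv (deriv E) t / 2)"
    unfolding sum_distrib_right by (intro sum.cong refl) simp
  finally show ?thesis
    unfolding sum_of_nat_times_gap by (simp add: E_def)
qed

end

theorem mainTheorem5:
  fixes F :: "real \<Rightarrow> real" and J :: "real set"
  assumes J_open: "open J" and J_interval: "is_interval J"
    and F_smooth: "\<forall>k. \<forall>t\<in>J. ((deriv ^^ k) F) differentiable (at t)"
    and F2_pos: "\<forall>t\<in>J. (deriv ^^ 2) F t > 0"
  shows "\<forall>n\<ge>1. \<forall>t\<in>J.
      lcoef F n 1 t = real n * (deriv ^^ 2) F t
    \<and> lcoef F n 2 t = (\<Sum>j\<in>{1..<n}. real j * deriv (deriv (\<lambda>s. ln (lcoef F (n - j) 1 s))) t)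
    \<and> (\<forall>p\<ge>3. lcoef F n p t = (\<Sum>j\<in>{1..<n}. real j * deriv (deriv (mcoef F (n - j) (p - 2))) t))
    \<and> lcoef F n 2 t = 1/2 * real n * (real n - 1) *
         (((deriv ^^ 2) F t * (deriv ^^ 4) F t - ((deriv ^^ 3) F t)\<^sup>2) / ((deriv ^^ 2) F t)\<^sup>2)
    \<and> lcoef F n 3 t = 1/12 * real n * (real n - 1) * (real n - 2) *
         deriv (deriv (\<lambda>s. ((deriv ^^ 2) F s * (deriv ^^ 4) F s - ((deriv ^^ 3) F s)\<^sup>2)
                           / ((deriv ^^ 2) F s) ^ 3)) t"
proof -
  have smooth_F: "smooth_on J F"
    using F_smooth by (simp add: smooth_on_iff_higher_deriv)
  note setting = J_open smooth_F F2_pos[rule_format]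
  show ?thesis
    by (intro allI impI ballI conjI lcoef_1 lcoef_2_hierarchy[OF setting] lcoef_hierarchy[OF setting]
        lcoef_2_closed_form[OF setting] lcoef_3_closed_form[OF setting])
qed

end
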